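(* Let $\Gamma=\langle V,(w_u)_{u\in V},\alpha,\beta\rangle$ be a celebrity game with $\beta>1$ and let $W=\sum_{u\in V}w_u$. Then: (i) if $\Gamma$ is a star celebrity game, $PoS(\Gamma)=1$; (ii) if $\Gamma$ is not a star celebrity game and $\alpha\ge W$, then $PoS(\Gamma)=PoA(\Gamma)=1$; (iii) if $\Gamma$ is not a star celebrity game and $\alpha<W$, then $PoS(\Gamma)=PoA(\Gamma)=W/\alpha>1$.
   Context: A celebrity game $\Gamma=\langle V,(w_u)_{u\in V},\alpha,\beta\rangle$ consists of a set of players $V=\{1,\dots,n\}$, celebrity weights $w_u>0$, a link cost $\alpha>0$ and a critical distance $\beta$ with $1\le\beta\le n-1$. A strategy of player $u$ is a set $S_u\subseteq V\setminus\{u\}$; a strategy profile is $S=(S_1,\dots,S_n)$; its outcome graph $G[S]$ is the undirected graph on $V$ with edge set $\{\{u,v\}: u\in S_v\text{ or }v\in S_u\}$. With $d_G$ the graph distance (infinite between different connected components), the cost of player $u$ is $c_u(S)=\alpha|S_u|+\sum_{v:\,d_{G[S]}(u,v)>\beta}w_v$ and the social cost is $C(S)=\sum_{u\in V}c_u(S)$. $S$ is a Nash equilibrium (NE) if no player can strictly decrease its cost by changing only its own strategy; a graph is an NE graph of $\Gamma$ if it is $G[S]$ for some NE $S$. $\mathrm{opt}(\Gamma)=\min_S C(S)$, $PoA(\Gamma)=\max_{S\text{ NE}}C(S)/\mathrm{opt}(\Gamma)$ and $PoS(\Gamma)=\min_{S\text{ NE}}C(S)/\mathrm{opt}(\Gamma)$.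 $\Gamma$ is a star celebrity game if it has an NE graph that is connected. *)

theory Defs
  imports Main "HOL-Library.Extended_Nat"
begin

definition players :: "nat \<Rightarrow> nat set" where
  "players n = {1..n}"

definition profiles :: "nat \<Rightarrow> (nat \<Rightarrow> nat set) set" where
  "profiles n = {S. (\<forall>u\<in>players n. S u \<subseteq> players n - {u}) \<and> (\<forall>u. u \<notin> players n \<longrightarrow> S u = {})}"

definition outcome_edges :: "(nat \<Rightarrow> nat set) \<Rightarrow> nat set set" where
  "outcome_edges S = {{u, v} | u v. u \<in> S v \<or> v \<in> S u}"

fun walk_le :: "nat set set \<Rightarrow> nat \<Rightarrow> nat \<Rightarrow> nat \<Rightarrow> bool" where
  "walk_le E 0 u v = (u = v)"
| "walk_le E (Suc k) u v = (walk_le E k u v \<or> (\<exists>x. walk_le E k u x \<and> {x, v} \<in> E))"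

definition gdist :: "nat set set \<Rightarrow> nat \<Rightarrow> nat \<Rightarrow> enat" where
  "gdist E u v = (if \<exists>k. walk_le E k u v then enat (LEAST k. walk_le E k u v) else \<infinity>)"

definition player_cost ::
  "nat \<Rightarrow> (nat \<Rightarrow> real) \<Rightarrow> real \<Rightarrow> nat \<Rightarrow> (nat \<Rightarrow> nat set) \<Rightarrow> nat \<Rightarrow> real" where
  "player_cost n w \<alpha> \<beta> S u =
     \<alpha> * real (card (S u)) +
     (\<Sum>v\<in>{v\<in>players n. gdist (outcome_edges S) u v > enat \<beta>}. w v)"

definition social_cost ::
  "nat \<Rightarrow> (nat \<Rightarrow> real) \<Rightarrow> real \<Rightarrow> nat \<Rightarrow> (nat \<Rightarrow> nat set) \<Rightarrow> real" where
  "social_cost n w \<alpha> \<beta> S = (\<Sum>u\<in>players n. player_cost n w \<alpha> \<beta> S u)"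

definition is_NE :: "nat \<Rightarrow> (nat \<Rightarrow> real) \<Rightarrow> real \<Rightarrow> nat \<Rightarrow> (nat \<Rightarrow> nat set) \<Rightarrow> bool" where
  "is_NE n w \<alpha> \<beta> S \<longleftrightarrow> S \<in> profiles n \<and>
     (\<forall>u\<in>players n. \<forall>T. S(u := T) \<in> profiles n \<longrightarrow>
        player_cost n w \<alpha> \<beta> S u \<le> player_cost n w \<alpha> \<beta> (S(u := T)) u)"

definition opt :: "nat \<Rightarrow> (nat \<Rightarrow> real) \<Rightarrow> real \<Rightarrow> nat \<Rightarrow> real" where
  "opt n w \<alpha> \<beta> = Min (social_cost n w \<alpha> \<beta> ` profiles n)"

definition PoA :: "nat \<Rightarrow> (nat \<Rightarrow> real) \<Rightarrow> real \<Rightarrow> nat \<Rightarrow> real" where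
  "PoA n w \<alpha> \<beta> = Max ((\<lambda>S. social_cost n w \<alpha> \<beta> S / opt n w \<alpha> \<beta>) ` {S. is_NE n w \<alpha> \<beta> S})"

definition PoS :: "nat \<Rightarrow> (nat \<Rightarrow> real) \<Rightarrow> real \<Rightarrow> nat \<Rightarrow> real" where
  "PoS n w \<alpha> \<beta> = Min ((\<lambda>S. social_cost n w \<alpha> \<beta> S / opt n w \<alpha> \<beta>) ` {S. is_NE n w \<alpha> \<beta> S})"

definition connected_graph :: "nat set \<Rightarrow> nat set set \<Rightarrow> bool" where
  "connected_graph V E \<longleftrightarrow> (\<forall>u\<in>V. \<forall>v\<in>V. gdist E u v < \<infinity>)"

definition star_celebrity_game :: "nat \<Rightarrow> (nat \<Rightarrow> real) \<Rightarrow> real \<Rightarrow> nat \<Rightarrow> bool" where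
  "star_celebrity_game n w \<alpha> \<beta> \<longleftrightarrow>
     (\<exists>S. is_NE n w \<alpha> \<beta> S \<and> connected_graph (players n) (outcome_edges S))"

definition celebrity_game :: "nat \<Rightarrow> (nat \<Rightarrow> real) \<Rightarrow> real \<Rightarrow> nat \<Rightarrow> bool" where
  "celebrity_game n w \<alpha> \<beta> \<longleftrightarrow>
     (\<forall>u\<in>players n. w u > 0) \<and> \<alpha> > 0 \<and> 1 \<le> \<beta> \<and> \<beta> \<le> n - 1"

end

theory Submission
  imports Defs
begin

text \<open>The social optimum is \<open>(n - 1) min(\<alpha>, W)\<close>: a graph with \<open>k\<close> components has at least
  \<open>n - k\<close> links, and every weight is unreached by at least \<open>k - 1\<close> players; a star attains
  \<open>\<alpha> (n - 1)\<close> and the empty graph \<open>W (n - 1)\<close>.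
  Call \<open>u\<close> critical if \<open>W - \<alpha> < w u < \<alpha>\<close>. In an equilibrium every bought link is indispensable
  for its buyer to reach each critical player within \<open>\<beta>\<close>. With two critical players \<open>u, u'\<close> this
  forces the empty profile: \<open>u\<close> buys nothing, and the last link of a shortest walk from \<open>u'\<close> to
  \<open>u\<close> would be dispensable. With at most one critical player, a star centred at it, whose centre
  buys exactly the links to players of weight at least \<open>\<alpha>\<close>, is a connected equilibrium of optimal
  cost. So star games are those with at most one critical player, and in all other games the
  empty profile is the only equilibrium, with both prices equal to \<open>W / min(\<alpha>, W)\<close>.\<close>

section \<open>Walks and connected components\<close>

lemma walk_le_mono: "walk_le E k a b \<Longrightarrow> k \<le> k' \<Longrightarrow> walk_le E k' a b"
proof -
  assume h: "walk_le E k a b" "k \<le> k'"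
  have "walk_le E (k + d) a b" for d by (induction d) (use h in auto)
  from this[of "k' - k"] h(2) show ?thesis by simp
qed

lemma walk_le_refl: "walk_le E k a a"
  using walk_le_mono[of E 0 a a k] by simp

lemma walk_le_edges_mono: "E \<subseteq> E' \<Longrightarrow> walk_le E k a b \<Longrightarrow> walk_le E' k a b"
  by (induction k arbitrary: b) auto

lemma walk_le_cons: "{a, x} \<in> E \<Longrightarrow> walk_le E k x b \<Longrightarrow> walk_le E (Suc k) a b"
  by (induction k arbitrary: b) auto

lemma walk_le_sym: "walk_le E k a b \<Longrightarrow> walk_le E k b a"
proof (induction k arbitrary: b)
  case (Suc k)
  then show ?case by (metis walk_le.simps(2) walk_le_cons insert_commute)
qed simp

lemma walk_le_trans: "walk_le E k a b \<Longrightarrow> walk_le E m b c \<Longrightarrow> walk_le E (k + m) a c"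
  by (induction m arbitrary: c) auto

lemma walk_le_isolated: "\<forall>y. {a, y} \<notin> E \<Longrightarrow> walk_le E k a v \<Longrightarrow> v = a"
  by (induction k arbitrary: v) auto

lemma walk_le_avoid:
  "walk_le E k a b \<Longrightarrow> \<forall>j\<le>k. \<not> walk_le E j a u \<Longrightarrow> walk_le {e\<in>E. u \<notin> e} k a b"
proof (induction k arbitrary: b)
  case (Suc k)
  show ?case
  proof (cases "walk_le E k a b")
    case False
    then obtain y where "walk_le E k a y" "{y, b} \<in> E" using Suc.prems by auto
    moreover from this have "y \<noteq> u" "b \<noteq> u" using Suc.prems by auto
    ultimately show ?thesis using Suc by auto
  qed (use Suc in simp)
qed simp

lemma walk_le_last_edge:
  assumes "walk_le E k a b" and "a \<noteq> b"
  obtains d p where "(LEAST j. walk_le E j a b) = Suc d" and "\<not> walk_le E d a b"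
    and "walk_le E d a p" and "{p, b} \<in> E"
proof -
  have w: "walk_le E (LEAST j. walk_le E j a b) a b" using assms(1) by (rule LeastI)
  then obtain d where d: "(LEAST j. walk_le E j a b) = Suc d"
    using assms(2) by (cases "LEAST j. walk_le E j a b") auto
  then have "\<not> walk_le E d a b" using not_less_Least[of d "\<lambda>j. walk_le E j a b"] by simp
  with w d show ?thesis using that by auto
qed

lemma gdist_gt_iff: "enat m < gdist E a b \<longleftrightarrow> \<not> walk_le E m a b"
proof
  assume "enat m < gdist E a b"
  then show "\<not> walk_le E m a b"
    unfolding gdist_def by (auto split: if_splits dest: Least_le[where k = m])
next
  assume h: "\<not> walk_le E m a b"
  show "enat m < gdist E a b"
  proof (cases "\<exists>k. walk_le E k a b")
    case True
    then have "walk_le E (LEAST k. walk_le E k a b) a b" by (rule LeastI_ex)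
    then have "\<not> (LEAST k. walk_le E k a b) \<le> m" using h walk_le_mono by blast
    then show ?thesis using True unfolding gdist_def by auto
  qed (simp add: gdist_def)
qed

definition reachable :: "nat set set \<Rightarrow> nat \<Rightarrow> nat \<Rightarrow> bool" where
  "reachable E a b \<longleftrightarrow> (\<exists>k. walk_le E k a b)"

lemma gdist_finite_iff_reachable: "gdist E a b < \<infinity> \<longleftrightarrow> reachable E a b"
  unfolding gdist_def reachable_def by auto

lemma reachable_sym: "reachable E a b \<Longrightarrow> reachable E b a"
  unfolding reachable_def using walk_le_sym by blast

lemma reachable_trans: "reachable E a b \<Longrightarrow> reachable E b c \<Longrightarrow> reachable E a c"
  unfolding reachable_def using walk_le_trans by blast

definition component_rep :: "nat set \<Rightarrow> nat set set \<Rightarrow> nat \<Rightarrow> nat" where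
  "component_rep V E v = Min {x \<in> V. reachable E v x}"

definition component_reps :: "nat set \<Rightarrow> nat set set \<Rightarrow> nat set" where
  "component_reps V E = {v \<in> V. component_rep V E v = v}"

lemma component_rep_reachable:
  assumes "finite V" and "v \<in> V"
  shows "component_rep V E v \<in> V \<and> reachable E v (component_rep V E v)"
proof -
  have "v \<in> {x \<in> V. reachable E v x}" using assms(2) walk_le_refl unfolding reachable_def by blast
  then have "component_rep V E v \<in> {x \<in> V. reachable E v x}"
    unfolding component_rep_def using assms(1) by (intro Min_in) auto
  then show ?thesis by simp
qed

lemma component_rep_eq:
  assumes "reachable E v v'"
  shows "component_rep V E v = component_rep V E v'"
proof -
  have "{x \<in> V. reachable E v x} = {x \<in> V. reachable E v' x}"
    using assms reachable_sym reachable_trans by blast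
  then show ?thesis unfolding component_rep_def by simp
qed

lemma component_rep_in_reps:
  "finite V \<Longrightarrow> v \<in> V \<Longrightarrow> component_rep V E v \<in> component_reps V E"
  unfolding component_reps_def
  using component_rep_reachable[of V v E] component_rep_eq[of E v "component_rep V E v" V] by simp

lemma component_reps_subset: "component_reps V E \<subseteq> V"
  unfolding component_reps_def by auto

section \<open>Profiles, costs and stars\<close>

lemma outcome_edges_iff: "{x, y} \<in> outcome_edges S \<longleftrightarrow> x \<in> S y \<or> y \<in> S x"
  unfolding outcome_edges_def by (auto simp: doubleton_eq_iff)

lemma finite_players [simp]: "finite (players n)"
  unfolding players_def by simp

lemma card_players [simp]: "card (players n) = n"
  unfolding players_def by simp

lemma profiles_strategy_subset: "S \<in> profiles n \<Longrightarrow> S u \<subseteq> players n - {u}"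
  unfolding profiles_def by (cases "u \<in> players n") auto

lemma profiles_finite_strategy: "S \<in> profiles n \<Longrightarrow> finite (S u)"
  using profiles_strategy_subset[of S n u] by (meson finite_Diff finite_players finite_subset)

lemma profiles_link: "S \<in> profiles n \<Longrightarrow> x \<in> S y \<Longrightarrow> y \<in> players n \<and> x \<in> players n \<and> x \<noteq> y"
  unfolding profiles_def by auto

lemma profiles_update:
  "S \<in> profiles n \<Longrightarrow> u \<in> players n \<Longrightarrow> T \<subseteq> players n - {u} \<Longrightarrow> S(u := T) \<in> profiles n"
  unfolding profiles_def by auto

lemma profiles_updateD: "S(u := T) \<in> profiles n \<Longrightarrow> u \<in> players n \<Longrightarrow> T \<subseteq> players n - {u}"
  using profiles_strategy_subset[of "S(u := T)" n u] by simp

lemma empty_profile: "(\<lambda>_. {}) \<in> profiles n"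
  unfolding profiles_def by auto

lemma finite_profiles: "finite (profiles n)"
proof (rule finite_subset)
  let ?F = "{f. \<forall>x. (x \<in> players n \<longrightarrow> f x \<in> Pow (players n)) \<and> (x \<notin> players n \<longrightarrow> f x = {})}"
  show "profiles n \<subseteq> ?F" unfolding profiles_def by auto
  show "finite ?F" by (rule finite_set_of_finite_funs) auto
qed

lemma is_NE_profile: "is_NE n w \<alpha> \<beta> S \<Longrightarrow> S \<in> profiles n"
  unfolding is_NE_def by simp

lemma is_NE_deviation:
  "is_NE n w \<alpha> \<beta> S \<Longrightarrow> u \<in> players n \<Longrightarrow> T \<subseteq> players n - {u} \<Longrightarrow>
     player_cost n w \<alpha> \<beta> S u \<le> player_cost n w \<alpha> \<beta> (S(u := T)) u"
  unfolding is_NE_def using profiles_update by blast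

definition far_players :: "nat \<Rightarrow> nat set set \<Rightarrow> nat \<Rightarrow> nat \<Rightarrow> nat set" where
  "far_players n E \<beta> u = {v \<in> players n. \<not> walk_le E \<beta> u v}"

lemma player_cost_far_players:
  "player_cost n w \<alpha> \<beta> S u = \<alpha> * real (card (S u)) + sum w (far_players n (outcome_edges S) \<beta> u)"
  unfolding player_cost_def far_players_def gdist_gt_iff ..

lemma far_players_subset: "far_players n E \<beta> u \<subseteq> players n"
  unfolding far_players_def by auto

lemma not_in_far_players_self: "u \<notin> far_players n E \<beta> u"
  unfolding far_players_def using walk_le_refl by auto

lemma far_players_isolated: "\<forall>y. {u, y} \<notin> E \<Longrightarrow> far_players n E \<beta> u = players n - {u}"
  unfolding far_players_def using walk_le_isolated[of u E] walk_le_refl[of E \<beta> u] by auto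

definition star_profile :: "nat \<Rightarrow> nat \<Rightarrow> nat set \<Rightarrow> nat \<Rightarrow> nat set" where
  "star_profile n c A = (\<lambda>x. if x = c then A else if x \<in> players n - {c} - A then {c} else {})"

context
  fixes n c :: nat and A :: "nat set"
  assumes c: "c \<in> players n" and A: "A \<subseteq> players n - {c}"
begin

lemma star_profile_in_profiles: "star_profile n c A \<in> profiles n"
  using c A unfolding profiles_def star_profile_def by auto

lemma star_profile_walk_2:
  assumes "p \<in> players n" and "q \<in> players n"
  shows "walk_le (outcome_edges (star_profile n c A)) 2 p q"
proof -
  let ?E = "outcome_edges (star_profile n c A)"
  have edge: "{c, v} \<in> ?E" if "v \<in> players n - {c}" for v
    using that A unfolding outcome_edges_iff star_profile_def by auto
  have to_c: "walk_le ?E 1 v c" if "v \<in> players n" for v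
    using edge[of v] that walk_le_refl[of ?E 1 c] by (cases "v = c") (auto simp: insert_commute)
  have "walk_le ?E (1 + 1) p q"
    using walk_le_trans[OF to_c[OF assms(1)] walk_le_sym[OF to_c[OF assms(2)]]] .
  then show ?thesis by (simp only: one_add_one)
qed

lemma star_profile_connected: "connected_graph (players n) (outcome_edges (star_profile n c A))"
  unfolding connected_graph_def gdist_finite_iff_reachable reachable_def
  using star_profile_walk_2 by blast

lemma far_players_star_profile:
  "2 \<le> \<beta> \<Longrightarrow> p \<in> players n \<Longrightarrow> far_players n (outcome_edges (star_profile n c A)) \<beta> p = {}"
  unfolding far_players_def using star_profile_walk_2 walk_le_mono by blast

lemma star_profile_card_links: "(\<Sum>p\<in>players n. card (star_profile n c A p)) = n - 1"
proof -
  let ?B = "players n - {c} - A"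
  have fin: "finite A" by (rule finite_subset[OF A]) simp
  have "(\<Sum>p\<in>players n. card (star_profile n c A p))
      = card (star_profile n c A c) + (\<Sum>p\<in>players n - {c}. card (star_profile n c A p))"
    using c by (simp add: sum.remove)
  also have "(\<Sum>p\<in>players n - {c}. card (star_profile n c A p)) = (\<Sum>p\<in>players n - {c}. if p \<in> ?B then 1 else 0)"
    by (intro sum.cong) (auto simp: star_profile_def)
  also have "\<dots> = card ?B"
    by (simp add: sum.If_cases) (rule arg_cong[where f = card], blast)
  also have "card (star_profile n c A c) = card A"
    by (simp add: star_profile_def)
  also have "card A + card ?B = n - 1"
    using c A card_Diff_subset[OF fin A] card_mono[of "players n - {c}" A] by simp
  finally show ?thesis .
qed

end

text \<open>Charge each player other than the representatives with the link ending a shortest walk from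
  its representative: two players charged the same link would each be strictly closer to their
  common representative than the other.\<close>
lemma card_non_reps_le_links:
  assumes S: "S \<in> profiles n"
  shows "card (players n - component_reps (players n) (outcome_edges S)) \<le> (\<Sum>u\<in>players n. card (S u))"
proof -
  define E where "E = outcome_edges S"
  define R where "R = component_reps (players n) E"
  let ?V = "players n" and ?\<rho> = "component_rep (players n) E"
  define D where "D v = (LEAST j. walk_le E j (?\<rho> v) v)" for v
  have "\<exists>p. walk_le E (D v - 1) (?\<rho> v) p \<and> {p, v} \<in> E \<and> 0 < D v" if v: "v \<in> ?V - R" for v
  proof -
    have "reachable E (?\<rho> v) v" using component_rep_reachable[of ?V v E] v by (auto intro: reachable_sym)
    then obtain k where "walk_le E k (?\<rho> v) v" unfolding reachable_def by blast
    moreover have "?\<rho> v \<noteq> v" using v unfolding R_def component_reps_def E_def by auto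
    ultimately obtain d p where "D v = Suc d" "walk_le E d (?\<rho> v) p" "{p, v} \<in> E"
      unfolding D_def by (rule walk_le_last_edge)
    then show ?thesis by auto
  qed
  then obtain P where P: "\<And>v. v \<in> ?V - R \<Longrightarrow> walk_le E (D v - 1) (?\<rho> v) (P v) \<and> {P v, v} \<in> E \<and> 0 < D v"
    by metis
  define g where "g v = (if v \<in> S (P v) then (P v, v) else (v, P v))" for v
  have g_Sigma: "g v \<in> Sigma ?V S" if "v \<in> ?V - R" for v
  proof -
    have "v \<in> S (P v) \<or> P v \<in> S v" using P[OF that] unfolding E_def outcome_edges_iff by auto
    then show ?thesis unfolding g_def using profiles_link[OF S] by auto
  qed
  have "inj_on g (?V - R)"
  proof
    fix v v' assume v: "v \<in> ?V - R" and v': "v' \<in> ?V - R" and eq: "g v = g v'"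
    show "v = v'"
    proof (rule ccontr)
      assume "v \<noteq> v'"
      with eq have Pv: "P v = v'" "P v' = v"
        unfolding g_def by (auto split: if_splits)
      then have "reachable E v' v" using P[OF v] walk_le_refl unfolding reachable_def
        by (metis walk_le.simps(2) One_nat_def)
      then have r: "?\<rho> v' = ?\<rho> v" by (rule component_rep_eq)
      have "D v' \<le> D v - 1" "D v \<le> D v' - 1"
        using P[OF v] P[OF v'] unfolding Pv r D_def by (auto intro: Least_le)
      then show False using P[OF v] P[OF v'] by linarith
    qed
  qed
  moreover have "g ` (?V - R) \<subseteq> Sigma ?V S" using g_Sigma by blast
  ultimately have "card (?V - R) \<le> card (Sigma ?V S)"
    using profiles_finite_strategy[OF S] by (intro card_inj_on_le) auto
  also have "\<dots> = (\<Sum>u\<in>?V. card (S u))"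
    using profiles_finite_strategy[OF S] by (simp add: card_SigmaI)
  finally show ?thesis unfolding R_def E_def .
qed

text \<open>A critical player \<open>u\<close> is worth less than a link, yet losing everybody but \<open>u\<close> costs
  less than a link.\<close>
definition critical :: "nat \<Rightarrow> (nat \<Rightarrow> real) \<Rightarrow> real \<Rightarrow> nat \<Rightarrow> bool" where
  "critical n w \<alpha> u \<longleftrightarrow> u \<in> players n \<and> sum w (players n) - \<alpha> < w u \<and> w u < \<alpha>"

definition has_two_critical :: "nat \<Rightarrow> (nat \<Rightarrow> real) \<Rightarrow> real \<Rightarrow> bool" where
  "has_two_critical n w \<alpha> \<longleftrightarrow> (\<exists>u u'. u \<noteq> u' \<and> critical n w \<alpha> u \<and> critical n w \<alpha> u')"

section \<open>Equilibria and the social optimum\<close>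

context
  fixes n :: nat and w :: "nat \<Rightarrow> real" and \<alpha> :: real and \<beta> :: nat
  assumes game: "celebrity_game n w \<alpha> \<beta>"
begin

lemma alpha_pos: "0 < \<alpha>"
  using game unfolding celebrity_game_def by simp

lemma weight_pos: "u \<in> players n \<Longrightarrow> 0 < w u"
  using game unfolding celebrity_game_def by simp

lemma sum_weights_nonneg: "A \<subseteq> players n \<Longrightarrow> 0 \<le> sum w A"
  using weight_pos by (intro sum_nonneg) (auto simp: less_imp_le)

lemma sum_weights_mono: "A \<subseteq> B \<Longrightarrow> B \<subseteq> players n \<Longrightarrow> sum w A \<le> sum w B"
  using weight_pos by (intro sum_mono2) (auto intro: finite_subset less_imp_le)

lemma sum_weights_Un_le: "A \<subseteq> players n \<Longrightarrow> B \<subseteq> players n \<Longrightarrow> sum w (A \<union> B) \<le> sum w A + sum w B"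
  using sum_Un[of A B w] sum_weights_nonneg[of "A \<inter> B"]
  by (auto simp: finite_subset[OF _ finite_players])

lemma sum_weights_remove: "y \<in> players n \<Longrightarrow> sum w (players n - {y}) = sum w (players n) - w y"
  by (simp add: sum_diff1)

lemma player_cost_ge_links: "\<alpha> * real (card (S u)) \<le> player_cost n w \<alpha> \<beta> S u"
  unfolding player_cost_far_players using sum_weights_nonneg[OF far_players_subset] by simp

lemma player_cost_nonneg: "0 \<le> player_cost n w \<alpha> \<beta> S u"
proof -
  have "0 \<le> \<alpha> * real (card (S u))" using alpha_pos by simp
  then show ?thesis using player_cost_ge_links[of S u] by linarith
qed

lemma player_cost_ge_alpha:
  assumes "finite (S u)" and "S u \<noteq> {}"
  shows "\<alpha> \<le> player_cost n w \<alpha> \<beta> S u"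
proof -
  have "1 \<le> card (S u)" using assms by (simp add: Suc_le_eq card_gt_0_iff)
  then have "\<alpha> \<le> \<alpha> * real (card (S u))" using alpha_pos by simp
  then show ?thesis using player_cost_ge_links[of S u] by linarith
qed

lemma NE_buyer_weight_bound:
  assumes NE: "is_NE n w \<alpha> \<beta> S" and z: "z \<in> players n" and "S z \<noteq> {}"
  shows "\<alpha> \<le> sum w (players n) - w z"
proof -
  have S: "S \<in> profiles n" using NE by (rule is_NE_profile)
  have "\<alpha> \<le> player_cost n w \<alpha> \<beta> S z"
    using assms(3) profiles_finite_strategy[OF S] by (intro player_cost_ge_alpha) auto
  also have "\<dots> \<le> player_cost n w \<alpha> \<beta> (S(z := {})) z"
    using is_NE_deviation[OF NE z] by simp
  also have "\<dots> \<le> sum w (players n - {z})"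
    unfolding player_cost_far_players
    using far_players_subset not_in_far_players_self by (simp add: sum_weights_mono subset_Diff_insert)
  finally show ?thesis using z by (simp add: sum_weights_remove)
qed

text \<open>Dropping the link saves \<open>\<alpha>\<close>; if \<open>y\<close> stays within reach (or was never within reach),
  the buyer loses at most the weight of everybody but \<open>y\<close>.\<close>
lemma NE_link_essential:
  assumes NE: "is_NE n w \<alpha> \<beta> S" and v: "v \<in> S z" and y: "y \<in> players n" and wy: "sum w (players n) - w y < \<alpha>"
  shows "walk_le (outcome_edges S) \<beta> z y \<and> \<not> walk_le (outcome_edges (S(z := S z - {v}))) \<beta> z y"
proof (rule ccontr)
  assume h: "\<not> ?thesis"
  let ?F = "far_players n (outcome_edges S) \<beta> z"
  let ?F' = "far_players n (outcome_edges (S(z := S z - {v}))) \<beta> z"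
  have S: "S \<in> profiles n" using NE by (rule is_NE_profile)
  have z: "z \<in> players n" using profiles_link[OF S v] by simp
  have fin: "finite (S z)" using profiles_finite_strategy[OF S] .
  have "?F' \<subseteq> ?F \<union> (players n - {y})" using h y unfolding far_players_def by auto
  then have "sum w ?F' \<le> sum w (?F \<union> (players n - {y}))"
    using far_players_subset by (intro sum_weights_mono) auto
  also have "\<dots> \<le> sum w ?F + (sum w (players n) - w y)"
    using sum_weights_Un_le[OF far_players_subset, of "players n - {y}"] y
    by (simp add: sum_weights_remove)
  finally have "sum w ?F' \<le> sum w ?F + (sum w (players n) - w y)" .
  moreover have "real (card (S z)) = real (card (S z - {v})) + 1"
    using v fin card_gt_0_iff[of "S z"] by (auto simp: of_nat_diff)
  then have "\<alpha> * real (card (S z)) = \<alpha> * real (card (S z - {v})) + \<alpha>"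
    by (simp only: distrib_left mult_1_right)
  ultimately have "player_cost n w \<alpha> \<beta> (S(z := S z - {v})) z < player_cost n w \<alpha> \<beta> S z"
    unfolding player_cost_far_players fun_upd_same using wy by linarith
  moreover have "S z - {v} \<subseteq> players n - {z}" using profiles_strategy_subset[OF S] by auto
  ultimately show False using is_NE_deviation[OF NE z] by (meson not_le)
qed

text \<open>The last link of a shortest walk from \<open>u'\<close> to \<open>u\<close> is bought by its other end \<open>x\<close>, which
  reaches \<open>u'\<close> without it along the rest of the walk; and if that rest is longer than \<open>\<beta>\<close>,
  then \<open>x\<close> does not reach \<open>u'\<close> within \<open>\<beta>\<close> at all.\<close>
lemma NE_unreachable_from_heavy:
  assumes NE: "is_NE n w \<alpha> \<beta> S" and u': "u' \<in> players n" and "u \<noteq> u'"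
    and Su: "S u = {}" and wu': "sum w (players n) - w u' < \<alpha>"
  shows "\<not> walk_le (outcome_edges S) k u' u"
proof
  let ?E = "outcome_edges S"
  assume "walk_le ?E k u' u"
  moreover have "u' \<noteq> u" using \<open>u \<noteq> u'\<close> by simp
  ultimately obtain d x where D: "(LEAST j. walk_le ?E j u' u) = Suc d" and nd: "\<not> walk_le ?E d u' u"
    and wx: "walk_le ?E d u' x" and ex: "{x, u} \<in> ?E"
    by (rule walk_le_last_edge)
  have uSx: "u \<in> S x" using ex Su by (simp add: outcome_edges_iff)
  let ?E' = "outcome_edges (S(x := S x - {u}))"
  have "\<forall>j\<le>d. \<not> walk_le ?E j u' u" using nd walk_le_mono by blast
  then have "walk_le {e\<in>?E. u \<notin> e} d u' x" using walk_le_avoid[OF wx] by blast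
  moreover have "{e\<in>?E. u \<notin> e} \<subseteq> ?E'" unfolding outcome_edges_def by auto
  ultimately have w': "walk_le ?E' d x u'" by (meson walk_le_edges_mono walk_le_sym)
  have ess: "walk_le ?E \<beta> x u'" "\<not> walk_le ?E' \<beta> x u'"
    using NE_link_essential[OF NE uSx u' wu'] by auto
  then have "\<beta> < d" using w' walk_le_mono by (meson not_le_imp_less)
  moreover have "walk_le ?E (Suc \<beta>) u' u" using walk_le_sym[OF ess(1)] ex by auto
  then have "Suc d \<le> Suc \<beta>" unfolding D[symmetric] by (rule Least_le)
  ultimately show False by simp
qed

lemma NE_empty_if_two_critical:
  assumes NE: "is_NE n w \<alpha> \<beta> S" and u: "critical n w \<alpha> u" and u': "critical n w \<alpha> u'"
    and "u \<noteq> u'"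
  shows "S = (\<lambda>_. {})"
proof
  fix z
  have S: "S \<in> profiles n" using NE by (rule is_NE_profile)
  have heavy: "x \<in> players n" "sum w (players n) - w x < \<alpha>" if "critical n w \<alpha> x" for x
    using that unfolding critical_def by auto
  have "S u = {}" using NE_buyer_weight_bound[OF NE heavy(1)[OF u]] heavy(2)[OF u] by fastforce
  show "S z = {}"
  proof (rule ccontr)
    assume "S z \<noteq> {}"
    then obtain v where v: "v \<in> S z" by auto
    let ?E = "outcome_edges S"
    have "walk_le ?E \<beta> z x" if "critical n w \<alpha> x" for x
      using NE_link_essential[OF NE v heavy[OF that]] by simp
    then have "walk_le ?E (\<beta> + \<beta>) u' u" using u u' by (meson walk_le_sym walk_le_trans)
    then show False
      using NE_unreachable_from_heavy[OF NE heavy(1)[OF u'] \<open>u \<noteq> u'\<close> \<open>S u = {}\<close> heavy(2)[OF u']]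
      by blast
  qed
qed

lemma critical_weights_le_alpha:
  assumes u: "critical n w \<alpha> u" and v: "v \<in> players n"
  shows "w v \<le> \<alpha>"
proof (cases "v = u")
  case False
  then have "sum w {v, u} \<le> sum w (players n)"
    using u v unfolding critical_def by (intro sum_weights_mono) auto
  then show ?thesis using False u unfolding critical_def by simp
qed (use u in \<open>simp add: critical_def\<close>)

lemma two_critical_if_expensive:
  assumes "sum w (players n) \<le> \<alpha>" and "2 \<le> n"
  shows "has_two_critical n w \<alpha>"
proof -
  have V: "1 \<in> players n" "2 \<in> players n" using assms(2) unfolding players_def by auto
  have "critical n w \<alpha> u" if u: "u \<in> players n" and u': "u' \<in> players n" "u' \<noteq> u" for u u'
  proof -
    have "sum w {u, u'} \<le> sum w (players n)" using u u' by (intro sum_weights_mono) auto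
    then show ?thesis
      using u u' weight_pos[OF u] weight_pos[OF u'(1)] assms(1) unfolding critical_def by simp
  qed
  then show ?thesis using V unfolding has_two_critical_def by (intro exI[of _ 1] exI[of _ 2]) auto
qed

lemma social_cost_empty_profile: "social_cost n w \<alpha> \<beta> (\<lambda>_. {}) = (real n - 1) * sum w (players n)"
proof -
  have "outcome_edges (\<lambda>_. {}) = {}" unfolding outcome_edges_def by simp
  then have "social_cost n w \<alpha> \<beta> (\<lambda>_. {}) = (\<Sum>u\<in>players n. sum w (players n) - w u)"
    unfolding social_cost_def player_cost_far_players
    by (intro sum.cong) (simp_all add: far_players_isolated sum_weights_remove)
  also have "\<dots> = (real n - 1) * sum w (players n)"
    by (simp add: sum_subtractf algebra_simps)
  finally show ?thesis .
qed

text \<open>A lone deviator \<open>u\<close> from the empty profile reaches only the players it links to, each of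
  whom is worth at most a link.\<close>
lemma empty_profile_NE:
  assumes light: "\<forall>v\<in>players n. w v \<le> \<alpha>"
  shows "is_NE n w \<alpha> \<beta> (\<lambda>_. {})"
  unfolding is_NE_def
proof (intro conjI ballI allI impI empty_profile)
  fix u T
  assume u: "u \<in> players n" and P: "(\<lambda>_. {}::nat set)(u := T) \<in> profiles n"
  let ?E = "outcome_edges ((\<lambda>_. {}::nat set)(u := T))"
  have T: "T \<subseteq> players n - {u}" using profiles_updateD[OF P u] .
  have reach: "walk_le ?E k u v \<Longrightarrow> v \<in> insert u T" for k v
    by (induction k arbitrary: v) (auto simp: outcome_edges_iff split: if_splits)
  have "players n - {u} - T \<subseteq> far_players n ?E \<beta> u"
    unfolding far_players_def using reach by blast
  then have "sum w (players n - {u} - T) \<le> sum w (far_players n ?E \<beta> u)"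
    using far_players_subset by (rule sum_weights_mono)
  moreover have "sum w T \<le> real (card T) * \<alpha>"
    using sum_bounded_above[of T w \<alpha>] light T by auto
  moreover have "sum w (players n - {u} - T) + sum w T = sum w (players n - {u})"
    using T by (metis add.commute finite_players finite_Diff sum.subset_diff)
  moreover have "outcome_edges (\<lambda>_. {}) = {}" unfolding outcome_edges_def by simp
  ultimately show "player_cost n w \<alpha> \<beta> (\<lambda>_. {}) u \<le> player_cost n w \<alpha> \<beta> ((\<lambda>_. {})(u := T)) u"
    unfolding player_cost_far_players by (simp add: far_players_isolated algebra_simps)
qed

text \<open>Every player is out of reach of the representatives of all other components.\<close>
lemma sum_far_players_ge_components:
  "(real (card (component_reps (players n) E)) - 1) * sum w (players n)
    \<le> (\<Sum>u\<in>players n. sum w (far_players n E \<beta> u))"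
proof -
  let ?V = "players n" and ?R = "component_reps (players n) E"
  let ?unreached = "\<lambda>v. {u \<in> ?V. \<not> reachable E u v}"
  have "real (card ?R) - 1 \<le> real (card (?unreached v))" if v: "v \<in> ?V" for v
  proof -
    have rep: "component_rep ?V E v \<in> ?R" using v by (simp add: component_rep_in_reps)
    have "?R - {component_rep ?V E v} \<subseteq> ?unreached v"
    proof
      fix r assume r: "r \<in> ?R - {component_rep ?V E v}"
      then have "component_rep ?V E r \<noteq> component_rep ?V E v" unfolding component_reps_def by simp
      then have "\<not> reachable E r v" using component_rep_eq[of E r v ?V] by auto
      then show "r \<in> ?unreached v" using r component_reps_subset by auto
    qed
    moreover have "finite (?unreached v)" by simp
    ultimately have "card (?R - {component_rep ?V E v}) \<le> card (?unreached v)"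
      by (rule card_mono[rotated])
    moreover have "finite ?R" by (rule finite_subset[OF component_reps_subset finite_players])
    ultimately show ?thesis using rep by (simp add: of_nat_diff)
  qed
  then have "(\<Sum>v\<in>?V. (real (card ?R) - 1) * w v) \<le> (\<Sum>v\<in>?V. real (card (?unreached v)) * w v)"
    using weight_pos by (intro sum_mono mult_right_mono) (auto simp: less_imp_le)
  also have "\<dots> = (\<Sum>u\<in>?V. sum w {v \<in> ?V. \<not> reachable E u v})"
    using sum.swap_restrict[of ?V ?V "\<lambda>u v. w v" "\<lambda>u v. \<not> reachable E u v"] by simp
  also have "\<dots> \<le> (\<Sum>u\<in>?V. sum w (far_players n E \<beta> u))"
    unfolding far_players_def reachable_def
    by (intro sum_mono sum_weights_mono) auto
  finally show ?thesis by (simp add: sum_distrib_left)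
qed

lemma social_cost_lower_bound:
  assumes S: "S \<in> profiles n" and "1 \<le> n"
  shows "(real n - 1) * min \<alpha> (sum w (players n)) \<le> social_cost n w \<alpha> \<beta> S"
proof -
  let ?V = "players n" and ?E = "outcome_edges S"
  let ?k = "card (component_reps ?V ?E)" and ?m = "min \<alpha> (sum w (players n))"
  have "1 \<in> ?V" using \<open>1 \<le> n\<close> unfolding players_def by simp
  then have "component_reps ?V ?E \<noteq> {}" using component_rep_in_reps[OF finite_players] by auto
  then have k1: "1 \<le> ?k"
    using finite_subset[OF component_reps_subset finite_players] by (simp add: Suc_le_eq card_gt_0_iff)
  have kn: "?k \<le> n" using card_mono[OF finite_players component_reps_subset] by simp
  have links: "real n - real ?k \<le> (\<Sum>u\<in>?V. real (card (S u)))"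
    using card_non_reps_le_links[OF S] card_Diff_subset[OF _ component_reps_subset] kn
    by (simp add: finite_subset[OF component_reps_subset] of_nat_diff flip: of_nat_sum)
  have "?m * (real n - real ?k) \<le> \<alpha> * (real n - real ?k)"
    using kn by (intro mult_right_mono) auto
  also have "\<dots> \<le> \<alpha> * (\<Sum>u\<in>?V. real (card (S u)))"
    using links alpha_pos by (intro mult_left_mono) auto
  finally have "?m * (real n - real ?k) \<le> \<alpha> * (\<Sum>u\<in>?V. real (card (S u)))" .
  moreover have "?m * (real ?k - 1) \<le> (\<Sum>u\<in>?V. sum w (far_players n ?E \<beta> u))"
    using sum_far_players_ge_components[of ?E] k1 mult_right_mono[of ?m "sum w (players n)" "real ?k - 1"]
    by (simp add: mult.commute)
  moreover have "social_cost n w \<alpha> \<beta> S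
      = \<alpha> * (\<Sum>u\<in>?V. real (card (S u))) + (\<Sum>u\<in>?V. sum w (far_players n ?E \<beta> u))"
    unfolding social_cost_def player_cost_far_players by (simp add: sum.distrib sum_distrib_left)
  ultimately show ?thesis by (simp add: algebra_simps)
qed

lemma social_cost_star_profile:
  assumes "c \<in> players n" and "A \<subseteq> players n - {c}" and "2 \<le> \<beta>"
  shows "social_cost n w \<alpha> \<beta> (star_profile n c A) = \<alpha> * (real n - 1)"
proof -
  have "1 \<le> n" using assms(1) unfolding players_def by simp
  have "social_cost n w \<alpha> \<beta> (star_profile n c A) = \<alpha> * real (\<Sum>p\<in>players n. card (star_profile n c A p))"
    unfolding social_cost_def player_cost_far_players sum_distrib_left of_nat_sum
    using far_players_star_profile[OF assms] by simp
  then show ?thesis using star_profile_card_links[OF assms(1,2)] \<open>1 \<le> n\<close> by (simp add: of_nat_diff)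
qed

lemma opt_eq:
  assumes "1 \<le> n" and "2 \<le> \<beta>"
  shows "opt n w \<alpha> \<beta> = (real n - 1) * min \<alpha> (sum w (players n))"
  unfolding opt_def
proof (rule Min_eqI)
  show "finite (social_cost n w \<alpha> \<beta> ` profiles n)" using finite_profiles by simp
  show "(real n - 1) * min \<alpha> (sum w (players n)) \<le> y" if "y \<in> social_cost n w \<alpha> \<beta> ` profiles n" for y
    using that social_cost_lower_bound[OF _ assms(1)] by auto
  have one: "1 \<in> players n" using assms(1) unfolding players_def by simp
  show "(real n - 1) * min \<alpha> (sum w (players n)) \<in> social_cost n w \<alpha> \<beta> ` profiles n"
  proof (cases "\<alpha> \<le> sum w (players n)")
    case True
    then have "social_cost n w \<alpha> \<beta> (star_profile n 1 {}) = (real n - 1) * min \<alpha> (sum w (players n))"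
      using social_cost_star_profile[OF one _ assms(2)] by simp
    then show ?thesis using star_profile_in_profiles[OF one] by (metis empty_subsetI image_eqI)
  next
    case False
    then have "social_cost n w \<alpha> \<beta> (\<lambda>_. {}) = (real n - 1) * min \<alpha> (sum w (players n))"
      using social_cost_empty_profile by simp
    then show ?thesis using empty_profile by (metis image_eqI)
  qed
qed

text \<open>If the centre drops a player of \<open>A\<close>, that player becomes isolated, which costs the centre
  at least the link it saves.\<close>
lemma star_profile_center_best_response:
  assumes c: "c \<in> players n" and A: "A \<subseteq> players n - {c}" and heavy: "\<forall>a\<in>A. \<alpha> \<le> w a"
    and "2 \<le> \<beta>" and T: "T \<subseteq> players n - {c}"
  shows "player_cost n w \<alpha> \<beta> (star_profile n c A) c
    \<le> player_cost n w \<alpha> \<beta> ((star_profile n c A)(c := T)) c"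
proof -
  let ?E = "outcome_edges ((star_profile n c A)(c := T))"
  have fin: "finite A" "finite T" using A T by (auto intro: finite_subset)
  have "A - T \<subseteq> far_players n ?E \<beta> c"
  proof
    fix a assume a: "a \<in> A - T"
    then have "\<forall>y. {a, y} \<notin> ?E" using A unfolding outcome_edges_iff star_profile_def by auto
    then have "far_players n ?E \<beta> a = players n - {a}" by (rule far_players_isolated)
    then have "\<not> walk_le ?E \<beta> a c" using a A c unfolding far_players_def by auto
    then show "a \<in> far_players n ?E \<beta> c" using a A walk_le_sym unfolding far_players_def by blast
  qed
  then have "sum w (A - T) \<le> sum w (far_players n ?E \<beta> c)"
    by (rule sum_weights_mono[OF _ far_players_subset])
  moreover have "real (card (A - T)) * \<alpha> \<le> sum w (A - T)"
    using heavy by (intro sum_bounded_below) auto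
  moreover have "real (card A) \<le> real (card T) + real (card (A - T))"
    using card_Int_Diff[OF fin(1), of T] card_mono[OF fin(2), of "A \<inter> T"] by simp
  then have "\<alpha> * real (card A) \<le> \<alpha> * real (card T) + \<alpha> * real (card (A - T))"
    using alpha_pos by (simp add: distrib_left[symmetric])
  ultimately show ?thesis
    unfolding player_cost_far_players
    using far_players_star_profile[OF c A \<open>2 \<le> \<beta>\<close> c] by (simp add: star_profile_def algebra_simps)
qed

lemma star_profile_NE:
  assumes c: "c \<in> players n" and "2 \<le> \<beta>" and others: "\<forall>v\<in>players n - {c}. \<not> critical n w \<alpha> v"
  shows "is_NE n w \<alpha> \<beta> (star_profile n c {v \<in> players n - {c}. \<alpha> \<le> w v})"
  unfolding is_NE_def
proof (intro conjI ballI allI impI)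
  define A where "A = {v \<in> players n - {c}. \<alpha> \<le> w v}"
  have A: "A \<subseteq> players n - {c}" unfolding A_def by auto
  let ?S = "star_profile n c A"
  show "star_profile n c {v \<in> players n - {c}. \<alpha> \<le> w v} \<in> profiles n"
    using star_profile_in_profiles[OF c A] unfolding A_def .
  fix p T
  assume p: "p \<in> players n" and P: "(star_profile n c {v \<in> players n - {c}. \<alpha> \<le> w v})(p := T) \<in> profiles n"
  have T: "T \<subseteq> players n - {p}" using profiles_updateD[OF P p] .
  have cost: "player_cost n w \<alpha> \<beta> ?S p = \<alpha> * real (card (?S p))"
    unfolding player_cost_far_players far_players_star_profile[OF c A \<open>2 \<le> \<beta>\<close> p] by simp
  consider "p = c" | "p \<in> A" | "p \<noteq> c" "p \<notin> A" by blast
  then have "player_cost n w \<alpha> \<beta> ?S p \<le> player_cost n w \<alpha> \<beta> (?S(p := T)) p"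
  proof cases
    case 1
    then show ?thesis
      using star_profile_center_best_response[OF c A _ \<open>2 \<le> \<beta>\<close>] T unfolding A_def by auto
  next
    case 2
    then have "?S p = {}" using A by (auto simp: star_profile_def)
    then show ?thesis using cost player_cost_nonneg by simp
  next
    case 3
    then have Sp: "?S p = {c}" using p by (simp add: star_profile_def)
    have light: "w p \<le> sum w (players n) - \<alpha>"
      using others p 3 unfolding A_def critical_def by force
    show ?thesis
    proof (cases "T = {}")
      case True
      then have "\<forall>y. {p, y} \<notin> outcome_edges (?S(p := T))"
        using 3 unfolding outcome_edges_iff star_profile_def by auto
      then have "player_cost n w \<alpha> \<beta> (?S(p := T)) p = sum w (players n) - w p"
        unfolding player_cost_far_players using True p
        by (simp add: far_players_isolated sum_weights_remove)
      then show ?thesis using cost Sp light by simp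
    next
      case False
      then have "\<alpha> \<le> player_cost n w \<alpha> \<beta> (?S(p := T)) p"
        using T by (intro player_cost_ge_alpha) (auto intro: finite_subset)
      then show ?thesis using cost Sp by simp
    qed
  qed
  then show "player_cost n w \<alpha> \<beta> (star_profile n c {v \<in> players n - {c}. \<alpha> \<le> w v}) p
       \<le> player_cost n w \<alpha> \<beta> ((star_profile n c {v \<in> players n - {c}. \<alpha> \<le> w v})(p := T)) p"
    unfolding A_def .
qed

lemma n_ge_3: "2 \<le> \<beta> \<Longrightarrow> 3 \<le> n"
  using game unfolding celebrity_game_def by linarith

lemma connected_star_NE_if_not_two_critical:
  assumes "2 \<le> \<beta>" and no2: "\<not> has_two_critical n w \<alpha>"
  obtains S where "is_NE n w \<alpha> \<beta> S" and "connected_graph (players n) (outcome_edges S)"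
    and "social_cost n w \<alpha> \<beta> S = \<alpha> * (real n - 1)"
proof -
  obtain c where c: "c \<in> players n" and others: "\<forall>v\<in>players n - {c}. \<not> critical n w \<alpha> v"
  proof (cases "\<exists>u. critical n w \<alpha> u")
    case True
    then obtain u where "critical n w \<alpha> u" by blast
    then show ?thesis using that no2 unfolding has_two_critical_def critical_def by blast
  next
    case False
    have "1 \<in> players n" using n_ge_3[OF assms(1)] unfolding players_def by simp
    then show ?thesis using that False by blast
  qed
  let ?A = "{v \<in> players n - {c}. \<alpha> \<le> w v}"
  have A: "?A \<subseteq> players n - {c}" by auto
  show ?thesis
    using that star_profile_NE[OF c assms(1) others] star_profile_connected[OF c A]
      social_cost_star_profile[OF c A assms(1)] by blast
qed

lemma star_celebrity_game_iff:
  assumes "2 \<le> \<beta>"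
  shows "star_celebrity_game n w \<alpha> \<beta> \<longleftrightarrow> \<not> has_two_critical n w \<alpha>"
proof
  assume "star_celebrity_game n w \<alpha> \<beta>"
  then obtain S where NE: "is_NE n w \<alpha> \<beta> S" and conn: "connected_graph (players n) (outcome_edges S)"
    unfolding star_celebrity_game_def by blast
  have "1 \<in> players n" "2 \<in> players n" using n_ge_3[OF assms] unfolding players_def by auto
  then have "S \<noteq> (\<lambda>_. {})"
    using conn walk_le_isolated[of 1 "{}" _ 2]
    unfolding connected_graph_def gdist_finite_iff_reachable reachable_def outcome_edges_def
    by fastforce
  then show "\<not> has_two_critical n w \<alpha>"
    using NE_empty_if_two_critical[OF NE] unfolding has_two_critical_def by blast
next
  assume "\<not> has_two_critical n w \<alpha>"
  then show "star_celebrity_game n w \<alpha> \<beta>"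
    unfolding star_celebrity_game_def using connected_star_NE_if_not_two_critical[OF assms] by metis
qed

lemma NE_set_if_two_critical:
  assumes "has_two_critical n w \<alpha>"
  shows "{S. is_NE n w \<alpha> \<beta> S} = {\<lambda>_. {}}"
proof -
  obtain u u' where "critical n w \<alpha> u" "critical n w \<alpha> u'" "u \<noteq> u'"
    using assms unfolding has_two_critical_def by blast
  then show ?thesis
    using NE_empty_if_two_critical empty_profile_NE critical_weights_le_alpha by blast
qed

end

section \<open>Prices of anarchy and stability\<close>

lemma PoS_eq_1_if_optimal_NE:
  assumes "is_NE n w \<alpha> \<beta> S" and "social_cost n w \<alpha> \<beta> S = opt n w \<alpha> \<beta>" and "0 < opt n w \<alpha> \<beta>"
  shows "PoS n w \<alpha> \<beta> = 1"
  unfolding PoS_def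
proof (rule Min_eqI)
  have "{S. is_NE n w \<alpha> \<beta> S} \<subseteq> profiles n" using is_NE_profile by blast
  then show "finite ((\<lambda>S. social_cost n w \<alpha> \<beta> S / opt n w \<alpha> \<beta>) ` {S. is_NE n w \<alpha> \<beta> S})"
    using finite_profiles finite_subset by blast
  show "1 \<le> y" if y_in: "y \<in> (\<lambda>S. social_cost n w \<alpha> \<beta> S / opt n w \<alpha> \<beta>) ` {S. is_NE n w \<alpha> \<beta> S}" for y
  proof -
    obtain S' where "is_NE n w \<alpha> \<beta> S'" and y: "y = social_cost n w \<alpha> \<beta> S' / opt n w \<alpha> \<beta>"
      using y_in by blast
    then have "opt n w \<alpha> \<beta> \<le> social_cost n w \<alpha> \<beta> S'"
      unfolding opt_def using finite_profiles is_NE_profile by (intro Min_le) auto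
    then show ?thesis using y assms(3) by simp
  qed
  show "1 \<in> (\<lambda>S. social_cost n w \<alpha> \<beta> S / opt n w \<alpha> \<beta>) ` {S. is_NE n w \<alpha> \<beta> S}"
    using assms by force
qed

lemma PoS_PoA_unique_NE:
  assumes "{S. is_NE n w \<alpha> \<beta> S} = {S\<^sub>0}"
  shows "PoS n w \<alpha> \<beta> = social_cost n w \<alpha> \<beta> S\<^sub>0 / opt n w \<alpha> \<beta>"
    and "PoA n w \<alpha> \<beta> = social_cost n w \<alpha> \<beta> S\<^sub>0 / opt n w \<alpha> \<beta>"
  unfolding PoS_def PoA_def assms by simp_all

theorem theorem1:
  fixes n :: nat and w :: "nat \<Rightarrow> real" and \<alpha> :: real and \<beta> :: nat
  assumes "celebrity_game n w \<alpha> \<beta>"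
    and "\<beta> > 1"
  defines "W \<equiv> (\<Sum>u\<in>players n. w u)"
  shows "(star_celebrity_game n w \<alpha> \<beta> \<longrightarrow> PoS n w \<alpha> \<beta> = 1)
     \<and> (\<not> star_celebrity_game n w \<alpha> \<beta> \<and> \<alpha> \<ge> W \<longrightarrow>
          PoS n w \<alpha> \<beta> = 1 \<and> PoA n w \<alpha> \<beta> = 1)
     \<and> (\<not> star_celebrity_game n w \<alpha> \<beta> \<and> \<alpha> < W \<longrightarrow>
          PoS n w \<alpha> \<beta> = W / \<alpha> \<and> PoA n w \<alpha> \<beta> = W / \<alpha> \<and> W / \<alpha> > 1)"
proof -
  note game = assms(1)
  have \<beta>: "2 \<le> \<beta>" using assms(2) by simp
  have n: "3 \<le> n" by (rule n_ge_3[OF game \<beta>])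
  have \<alpha>: "0 < \<alpha>" by (rule alpha_pos[OF game])
  have W: "0 < W" unfolding W_def using weight_pos[OF game] n
    by (intro sum_pos) (auto simp: players_def)
  have opt: "opt n w \<alpha> \<beta> = (real n - 1) * min \<alpha> W"
    unfolding W_def using opt_eq[OF game _ \<beta>] n by simp
  have "PoS n w \<alpha> \<beta> = 1" if "star_celebrity_game n w \<alpha> \<beta>"
  proof -
    have no2: "\<not> has_two_critical n w \<alpha>" using that star_celebrity_game_iff[OF game \<beta>] by blast
    then have "\<alpha> < W" using two_critical_if_expensive[OF game] n unfolding W_def by force
    obtain S where "is_NE n w \<alpha> \<beta> S" "social_cost n w \<alpha> \<beta> S = \<alpha> * (real n - 1)"
      using connected_star_NE_if_not_two_critical[OF game \<beta> no2] .
    then show ?thesis using \<open>\<alpha> < W\<close> n \<alpha> opt by (intro PoS_eq_1_if_optimal_NE) auto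
  qed
  moreover have "PoS n w \<alpha> \<beta> = W / min \<alpha> W \<and> PoA n w \<alpha> \<beta> = W / min \<alpha> W"
    if "\<not> star_celebrity_game n w \<alpha> \<beta>"
  proof -
    have "{S. is_NE n w \<alpha> \<beta> S} = {\<lambda>_. {}}"
      using that star_celebrity_game_iff[OF game \<beta>] NE_set_if_two_critical[OF game] by blast
    moreover have "social_cost n w \<alpha> \<beta> (\<lambda>_. {}) / opt n w \<alpha> \<beta> = W / min \<alpha> W"
      using social_cost_empty_profile[OF game] opt n unfolding W_def by simp
    ultimately show ?thesis using PoS_PoA_unique_NE by metis
  qed
  ultimately show ?thesis using W \<alpha> by (auto simp: min_def)
qed

end
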